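(* Let $X_1,\dots,X_n$ be mutually independent random variables with given distributions on ranges $D_1,\dots,D_n$ and product distribution $\mu$, and let $A_1,\dots,A_m$ be arbitrary events, $A_i$ determined by the variables indexed by $\mathrm{vbl}(A_i)\subseteq[n]$. Run the General Partial Rejection Sampling algorithm: draw all variables independently; while at least one $A_i$ occurs under the current assignment $\sigma$, compute $\mathrm{Res}(\sigma)$ and independently resample all variables in $\bigcup_{i\in\mathrm{Res}(\sigma)}\mathrm{vbl}(A_i)$; when no $A_i$ occurs, output the current assignment. If the algorithm halts, its output is distributed as $\mu$ conditioned on $\bigwedge_{i=1}^m\overline{A_i}$.
   Context: Dependency graph $G$ on $[m]$: distinct $i,j$ adjacent iff $\mathrm{vbl}(A_i)\cap\mathrm{vbl}(A_j)\neq\emptyset$. Notation: $\mathrm{Bad}(\sigma)=\{i:\sigma\in A_i\}$; $\partial S=\{i\notin S: i\text{ adjacent to some }j\in S\}$; $\mathrm{vbl}(S)=\bigcup_{i\in S}\mathrm{vbl}(A_i)$. We write $A_i\cap\sigma_S=\emptyset$ if either $\mathrm{vbl}(A_i)\cap\mathrm{vbl}(S)=\emptyset$ or no assignment agreeing with $\sigma$ on $\mathrm{vbl}(A_i)\cap\mathrm{vbl}(S)$ belongs to $A_i$; otherwise $A_i\cap\sigma_S\ne\emptyset$. $\mathrm{Res}(\sigma)$ is the output of: start with $R=\mathrm{Bad}(\sigma)$, $N=\emptyset$; while $\partial R\setminus N\neq\emptyset$, for each $i\in\partial R\setminus N$ (with $R$ the current set) put $i$ into $R$ if $A_i\cap\sigma_R\ne\emptyset$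 and into $N$ otherwise; output $R$. *)

theory Defs
  imports "HOL-Probability.Probability" "HOL-Library.While_Combinator"
begin

text \<open>Variables are indexed by {0..<n}, events by {0..<m}. An assignment is a function
  nat => 'd (values outside {0..<n} are irrelevant; in the product pmf they equal a
  default value d). vbl i is the set of variables event i depends on; A i is the event
  (a set of assignments).\<close>

definition vblS :: "(nat \<Rightarrow> nat set) \<Rightarrow> nat set \<Rightarrow> nat set" where
  "vblS vbl S = (\<Union>i\<in>S. vbl i)"

definition Bad :: "nat \<Rightarrow> (nat \<Rightarrow> (nat \<Rightarrow> 'd) set) \<Rightarrow> (nat \<Rightarrow> 'd) \<Rightarrow> nat set" where
  "Bad m A \<sigma> = {i. i < m \<and> \<sigma> \<in> A i}"

definition bdry :: "nat \<Rightarrow> (nat \<Rightarrow> nat set) \<Rightarrow> nat set \<Rightarrow> nat set" where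
  "bdry m vbl S = {i. i < m \<and> i \<notin> S \<and> (\<exists>j\<in>S. j \<noteq> i \<and> vbl i \<inter> vbl j \<noteq> {})}"

definition assignments :: "nat \<Rightarrow> (nat \<Rightarrow> 'd set) \<Rightarrow> (nat \<Rightarrow> 'd) set" where
  "assignments n Dom = {\<tau>. \<forall>j<n. \<tau> j \<in> Dom j}"

text \<open>"A_i \<inter> \<sigma>_S \<noteq> {}".\<close>
definition meets :: "nat \<Rightarrow> (nat \<Rightarrow> 'd set) \<Rightarrow> (nat \<Rightarrow> nat set) \<Rightarrow> (nat \<Rightarrow> (nat \<Rightarrow> 'd) set)
                      \<Rightarrow> nat \<Rightarrow> (nat \<Rightarrow> 'd) \<Rightarrow> nat set \<Rightarrow> bool" where
  "meets n Dom vbl A i \<sigma> S \<longleftrightarrow>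
     vbl i \<inter> vblS vbl S \<noteq> {} \<and>
     (\<exists>\<tau>\<in>assignments n Dom. (\<forall>j\<in>vbl i \<inter> vblS vbl S. \<tau> j = \<sigma> j) \<and> \<tau> \<in> A i)"

text \<open>One round of the Res procedure (all i in the current \<partial>R - N are examined w.r.t. the
  R of the start of the round).\<close>
definition res_step :: "nat \<Rightarrow> nat \<Rightarrow> (nat \<Rightarrow> 'd set) \<Rightarrow> (nat \<Rightarrow> nat set) \<Rightarrow> (nat \<Rightarrow> (nat \<Rightarrow> 'd) set)
                      \<Rightarrow> (nat \<Rightarrow> 'd) \<Rightarrow> nat set \<times> nat set \<Rightarrow> nat set \<times> nat set" where
  "res_step n m Dom vbl A \<sigma> RN =
     (let R = fst RN; N = snd RN; C = bdry m vbl R - N in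
       (R \<union> {i\<in>C. meets n Dom vbl A i \<sigma> R}, N \<union> {i\<in>C. \<not> meets n Dom vbl A i \<sigma> R}))"

definition Res :: "nat \<Rightarrow> nat \<Rightarrow> (nat \<Rightarrow> 'd set) \<Rightarrow> (nat \<Rightarrow> nat set) \<Rightarrow> (nat \<Rightarrow> (nat \<Rightarrow> 'd) set)
                   \<Rightarrow> (nat \<Rightarrow> 'd) \<Rightarrow> nat set" where
  "Res n m Dom vbl A \<sigma> =
     fst (while (\<lambda>RN. bdry m vbl (fst RN) - snd RN \<noteq> {}) (res_step n m Dom vbl A \<sigma>) (Bad m A \<sigma>, {}))"

partial_function (spmf) gprs_loop ::
  "(nat \<Rightarrow> 'd pmf) \<Rightarrow> 'd \<Rightarrow> ((nat \<Rightarrow> 'd) \<Rightarrow> bool) \<Rightarrow> ((nat \<Rightarrow> 'd) \<Rightarrow> nat set)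
     \<Rightarrow> (nat \<Rightarrow> 'd) \<Rightarrow> (nat \<Rightarrow> 'd) spmf" where
  "gprs_loop P d halt rs \<sigma> =
     (if halt \<sigma> then return_spmf \<sigma>
      else bind_spmf (spmf_of_pmf (Pi_pmf (rs \<sigma>) d P))
             (\<lambda>\<tau>. gprs_loop P d halt rs (\<lambda>j. if j \<in> rs \<sigma> then \<tau> j else \<sigma> j)))"

definition prod_dist :: "nat \<Rightarrow> (nat \<Rightarrow> 'd pmf) \<Rightarrow> 'd \<Rightarrow> (nat \<Rightarrow> 'd) pmf" where
  "prod_dist n P d = Pi_pmf {0..<n} d P"

text \<open>General Partial Rejection Sampling; output distribution (subprobability: the
  missing mass is non-termination).\<close>
definition GPRS :: "nat \<Rightarrow> nat \<Rightarrow> (nat \<Rightarrow> 'd set) \<Rightarrow> (nat \<Rightarrow> 'd pmf) \<Rightarrow> 'd \<Rightarrow> (nat \<Rightarrow> nat set)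
                    \<Rightarrow> (nat \<Rightarrow> (nat \<Rightarrow> 'd) set) \<Rightarrow> (nat \<Rightarrow> 'd) spmf" where
  "GPRS n m Dom P d vbl A =
     bind_spmf (spmf_of_pmf (prod_dist n P d))
       (gprs_loop P d (\<lambda>\<sigma>. Bad m A \<sigma> = {}) (\<lambda>\<sigma>. vblS vbl (Res n m Dom vbl A \<sigma>)))"

end

theory Submission
  imports Defs
begin

text \<open>The output law is pinned down by an invariant of the loop body: for every set \<open>J\<close> of events,
  running the algorithm from \<open>\<mu>\<close> restricted to the assignments avoiding \<open>J\<close> gives a subdistribution
  proportional to \<open>\<mu>\<close> on the good assignments. Admissibility carries it to the least fixed point.
  For one step, split the starting assignments by \<open>R = Res \<sigma>\<close>. Given the values on \<open>vbl(R)\<close>, the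
  block \<open>{Res \<sigma> = R, \<sigma> avoids J}\<close> consists exactly of the assignments avoiding the events untouched
  by \<open>R\<close> (outside \<open>R\<close>, sharing no variable with it), and those events do not read \<open>vbl(R)\<close>. So
  resampling \<open>vbl(R)\<close> restarts the algorithm from \<open>\<mu>\<close> restricted to avoiding the untouched events,
  scaled by the probability of the block's pattern on \<open>vbl(R)\<close>, and the invariant applies again.\<close>

lemma bdry_subset_lessThan: "bdry m vbl R \<subseteq> {..<m}"
  by (auto simp: bdry_def)

lemma vblS_mono: "S \<subseteq> T \<Longrightarrow> vblS vbl S \<subseteq> vblS vbl T"
  by (auto simp: vblS_def)

lemma vbl_subset_vblS: "i \<in> S \<Longrightarrow> vbl i \<subseteq> vblS vbl S"
  by (auto simp: vblS_def)

locale res_procedure =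
  fixes n m :: nat and Dom :: "nat \<Rightarrow> 'd set"
    and vbl :: "nat \<Rightarrow> nat set" and A :: "nat \<Rightarrow> (nat \<Rightarrow> 'd) set"
begin

abbreviation "res \<equiv> Res n m Dom vbl A"
abbreviation "rstep \<equiv> res_step n m Dom vbl A"
abbreviation "unsettled RN \<equiv> bdry m vbl (fst RN) - snd RN \<noteq> {}"

definition "res_iter \<sigma> k = (rstep \<sigma> ^^ k) (Bad m A \<sigma>, {})"

definition "untouched R = {i. i < m \<and> i \<notin> R \<and> vbl i \<inter> vblS vbl R = {}}"

definition "avoiding J = {\<sigma>. \<forall>i\<in>J. \<sigma> \<notin> A i}"

lemma res_iter_0 [simp]: "res_iter \<sigma> 0 = (Bad m A \<sigma>, {})"
  by (simp add: res_iter_def)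

lemma res_iter_Suc: "res_iter \<sigma> (Suc k) = rstep \<sigma> (res_iter \<sigma> k)"
  by (simp add: res_iter_def)

lemma rstep_mono: "fst s \<subseteq> fst (rstep \<sigma> s)"
  by (auto simp: res_step_def Let_def)

lemma rstep_settled: "\<not> unsettled s \<Longrightarrow> rstep \<sigma> s = s"
  by (cases s) (auto simp: res_step_def Let_def)

lemma rstep_examined: "fst (rstep \<sigma> s) \<union> snd (rstep \<sigma> s) = fst s \<union> snd s \<union> (bdry m vbl (fst s) - snd s)"
  by (auto simp: res_step_def Let_def)

lemma res_iter_subset: "fst (res_iter \<sigma> k) \<union> snd (res_iter \<sigma> k) \<subseteq> {..<m}"
  by (induction k) (auto simp: res_iter_Suc rstep_examined Bad_def bdry_def)

text \<open>Each unsettled round examines a new event, so at most \<open>m\<close> rounds are unsettled.\<close>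
lemma res_iter_unsettled_card:
  "unsettled (res_iter \<sigma> k) \<Longrightarrow> k \<le> card (fst (res_iter \<sigma> k) \<union> snd (res_iter \<sigma> k))"
proof (induction k)
  case (Suc k)
  let ?s = "res_iter \<sigma> k"
  have unsettled: "unsettled ?s"
  proof (rule ccontr)
    assume "\<not> unsettled ?s"
    with Suc.prems show False by (simp add: res_iter_Suc rstep_settled)
  qed
  have "finite (fst ?s \<union> snd ?s \<union> (bdry m vbl (fst ?s) - snd ?s))"
    using res_iter_subset[of \<sigma> k] bdry_subset_lessThan
    by (meson finite_Un finite_Diff finite_lessThan finite_subset)
  moreover have "fst ?s \<union> snd ?s \<subset> fst ?s \<union> snd ?s \<union> (bdry m vbl (fst ?s) - snd ?s)"
    using unsettled by (auto simp: bdry_def)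
  ultimately have "card (fst ?s \<union> snd ?s) < card (fst (res_iter \<sigma> (Suc k)) \<union> snd (res_iter \<sigma> (Suc k)))"
    unfolding res_iter_Suc rstep_examined by (intro psubset_card_mono)
  with Suc.IH[OF unsettled] show ?case by simp
qed simp

lemma res_iter_settled: "\<not> unsettled (res_iter \<sigma> (Suc m))"
proof
  assume "unsettled (res_iter \<sigma> (Suc m))"
  then have "Suc m \<le> card (fst (res_iter \<sigma> (Suc m)) \<union> snd (res_iter \<sigma> (Suc m)))"
    by (rule res_iter_unsettled_card)
  also have "\<dots> \<le> card {..<m}"
    using res_iter_subset by (intro card_mono) auto
  finally show False by simp
qed

lemma res_iter_stable: "\<not> unsettled (res_iter \<sigma> k) \<Longrightarrow> res_iter \<sigma> (k + j) = res_iter \<sigma> k"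
  by (induction j) (auto simp: res_iter_Suc rstep_settled)

lemma res_iter_settled_eq:
  assumes "\<not> unsettled (res_iter \<sigma> k)" "\<not> unsettled (res_iter \<sigma> k')"
  shows "res_iter \<sigma> k = res_iter \<sigma> k'"
proof (cases "k \<le> k'")
  case True
  then show ?thesis using res_iter_stable[OF assms(1), of "k' - k"] by simp
next
  case False
  then show ?thesis using res_iter_stable[OF assms(2), of "k - k'"] by simp
qed

lemma Res_eq_res_iter:
  assumes settled: "\<not> unsettled (res_iter \<sigma> k)"
  shows "res \<sigma> = fst (res_iter \<sigma> k)"
proof -
  have ex: "\<exists>k. \<not> unsettled ((rstep \<sigma> ^^ k) (Bad m A \<sigma>, {}))"
    using res_iter_settled unfolding res_iter_def by blast
  let ?k = "LEAST k. \<not> unsettled ((rstep \<sigma> ^^ k) (Bad m A \<sigma>, {}))"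
  have "\<not> unsettled (res_iter \<sigma> ?k)"
    using LeastI_ex[OF ex] by (simp add: res_iter_def)
  then have "res_iter \<sigma> ?k = res_iter \<sigma> k"
    using settled by (rule res_iter_settled_eq)
  then show ?thesis
    unfolding Res_def while_def while_option_def using ex by (simp add: res_iter_def)
qed

lemma res_iter_mono: "fst (res_iter \<sigma> k) \<subseteq> fst (res_iter \<sigma> (k + j))"
proof (induction j)
  case (Suc j)
  also have "fst (res_iter \<sigma> (k + j)) \<subseteq> fst (res_iter \<sigma> (k + Suc j))"
    by (simp add: res_iter_Suc rstep_mono)
  finally show ?case .
qed simp

lemma res_iter_subset_Res: "fst (res_iter \<sigma> k) \<subseteq> res \<sigma>"
proof -
  have "fst (res_iter \<sigma> k) \<subseteq> fst (res_iter \<sigma> (Suc m + k))"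
    using res_iter_mono by (metis add.commute)
  also have "\<dots> = res \<sigma>"
    using res_iter_stable[OF res_iter_settled] Res_eq_res_iter[OF res_iter_settled] by simp
  finally show ?thesis .
qed

lemma Bad_subset_Res: "Bad m A \<sigma> \<subseteq> res \<sigma>"
  using res_iter_subset_Res[of \<sigma> 0] by simp

lemma Res_subset_lessThan: "res \<sigma> \<subseteq> {..<m}"
  using res_iter_subset[of \<sigma> "Suc m"] Res_eq_res_iter[OF res_iter_settled] by auto

lemma Res_empty_iff: "res \<sigma> = {} \<longleftrightarrow> Bad m A \<sigma> = {}"
proof
  assume "Bad m A \<sigma> = {}"
  then have "\<not> unsettled (res_iter \<sigma> 0)" by (simp add: bdry_def)
  with \<open>Bad m A \<sigma> = {}\<close> show "res \<sigma> = {}" using Res_eq_res_iter[of \<sigma> 0] by simp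
qed (use Bad_subset_Res in blast)

lemma rejected_event_avoided:
  assumes "i \<in> snd (res_iter \<sigma> k)" "\<tau> \<in> assignments n Dom"
    and "\<forall>j\<in>vbl i \<inter> vblS vbl (fst (res_iter \<sigma> k)). \<tau> j = \<sigma> j"
  shows "\<tau> \<notin> A i"
  using assms
proof (induction k arbitrary: i)
  case (Suc k)
  let ?R = "fst (res_iter \<sigma> k)"
  have agree: "\<forall>j\<in>vbl i \<inter> vblS vbl ?R. \<tau> j = \<sigma> j"
    using Suc.prems(3) vblS_mono[OF rstep_mono[of "res_iter \<sigma> k" \<sigma>]] by (auto simp: res_iter_Suc)
  show ?case
  proof (cases "i \<in> snd (res_iter \<sigma> k)")
    case False
    then have "i \<in> bdry m vbl ?R" and "\<not> meets n Dom vbl A i \<sigma> ?R"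
      using Suc.prems(1) by (auto simp: res_iter_Suc res_step_def Let_def)
    moreover from this have "vbl i \<inter> vblS vbl ?R \<noteq> {}"
      by (auto simp: bdry_def vblS_def)
    ultimately show ?thesis
      using Suc.prems(2) agree unfolding meets_def by blast
  qed (use Suc agree in blast)
qed simp

lemma bdry_Res_avoided:
  assumes "i \<in> bdry m vbl (res \<sigma>)" "\<tau> \<in> assignments n Dom"
    and "\<forall>j\<in>vbl i \<inter> vblS vbl (res \<sigma>). \<tau> j = \<sigma> j"
  shows "\<tau> \<notin> A i"
proof -
  have R: "res \<sigma> = fst (res_iter \<sigma> (Suc m))"
    by (rule Res_eq_res_iter[OF res_iter_settled])
  have "i \<in> snd (res_iter \<sigma> (Suc m))"
    using assms(1) res_iter_settled[of \<sigma>] unfolding R by blast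
  then show ?thesis
    using assms(2,3) unfolding R by (rule rejected_event_avoided)
qed

lemma event_cases:
  assumes "i < m"
  obtains "i \<in> R" | "i \<in> bdry m vbl R" | "i \<in> untouched R"
proof (cases "i \<in> R")
  case False
  show ?thesis
  proof (cases "vbl i \<inter> vblS vbl R = {}")
    case True
    with False assms show ?thesis by (intro that(3)) (simp add: untouched_def)
  next
    case touching: False
    have "i \<in> bdry m vbl R"
      using False touching assms by (auto simp: bdry_def vblS_def)
    then show ?thesis by (rule that(2))
  qed
qed (rule that(1))

lemma avoiding_untouched_Res: "\<sigma> \<in> avoiding (untouched (res \<sigma>))"
  using Bad_subset_Res[of \<sigma>] by (auto simp: avoiding_def untouched_def Bad_def)

lemma untouched_subset_lessThan: "untouched R \<subseteq> {..<m}"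
  by (auto simp: untouched_def)

lemma avoided_off_Res:
  assumes "\<tau> \<in> assignments n Dom" "\<forall>j\<in>vblS vbl (res \<sigma>). \<tau> j = \<sigma> j"
    and "\<tau> \<in> avoiding (untouched (res \<sigma>))" "i < m" "i \<notin> res \<sigma>"
  shows "\<tau> \<notin> A i"
  using assms(4)
proof (cases rule: event_cases[where R = "res \<sigma>"])
  case 2
  then show ?thesis using assms(1,2) by (intro bdry_Res_avoided) auto
next
  case 3
  then show ?thesis using assms(3) by (simp add: avoiding_def)
qed (use assms(5) in blast)

text \<open>\<open>Res\<close> reads \<open>\<sigma>\<close> only on the variables of the current set \<open>R\<close>.\<close>
lemma Res_cong:
  assumes "Bad m A \<tau> = Bad m A \<sigma>" "\<forall>j\<in>vblS vbl (res \<sigma>). \<tau> j = \<sigma> j"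
  shows "res \<tau> = res \<sigma>"
proof -
  have "res_iter \<tau> k = res_iter \<sigma> k" for k
  proof (induction k)
    case (Suc k)
    have "\<forall>j\<in>vblS vbl (fst (res_iter \<sigma> k)). \<tau> j = \<sigma> j"
      using assms(2) vblS_mono[OF res_iter_subset_Res] by blast
    then have "meets n Dom vbl A i \<tau> (fst (res_iter \<sigma> k)) = meets n Dom vbl A i \<sigma> (fst (res_iter \<sigma> k))" for i
      unfolding meets_def by auto
    then show ?case using Suc by (simp add: res_iter_Suc res_step_def Let_def)
  qed (simp add: assms(1))
  then show ?thesis
    by (simp add: Res_eq_res_iter[OF res_iter_settled])
qed

end

lemma ennreal_spmf_bind_if_const:
  "ennreal (spmf (bind_pmf p (\<lambda>a. if F a then q else return_pmf None)) x)
     = emeasure (measure_pmf p) {a. F a} * ennreal (spmf q x)"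
proof -
  have "ennreal (spmf (bind_pmf p (\<lambda>a. if F a then q else return_pmf None)) x)
      = (\<integral>\<^sup>+ a. ennreal (spmf q x) * indicator {a. F a} a \<partial>measure_pmf p)"
    unfolding ennreal_pmf_bind by (intro nn_integral_cong) (auto simp: indicator_def)
  also have "\<dots> = ennreal (spmf q x) * emeasure (measure_pmf p) {a. F a}"
    by (simp add: nn_integral_cmult_indicator)
  finally show ?thesis
    by (simp add: mult.commute)
qed

lemma ennreal_spmf_bind_if_return:
  "ennreal (spmf (bind_pmf p (\<lambda>a. if a \<in> C then return_spmf a else return_pmf None)) x)
     = (if x \<in> C then ennreal (pmf p x) else 0)"
proof -
  have "ennreal (spmf (bind_pmf p (\<lambda>a. if a \<in> C then return_spmf a else return_pmf None)) x)
      = (\<integral>\<^sup>+ a. (if x \<in> C then indicator {x} a else 0) \<partial>measure_pmf p)"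
    unfolding ennreal_pmf_bind by (intro nn_integral_cong) (auto simp: indicator_def)
  then show ?thesis
    by (simp add: emeasure_pmf_single)
qed

lemma mcont_mult_ennreal:
  assumes "mcont lub ord Sup (\<le>) f"
  shows "mcont lub ord Sup (\<le>) (\<lambda>x. f x * (c :: ennreal))"
  unfolding mcont_def
proof
  show "monotone ord (\<le>) (\<lambda>x. f x * c)"
    using mcont_mono[OF assms] by (auto simp: monotone_def intro: mult_right_mono)
  show "cont lub ord Sup (\<le>) (\<lambda>x. f x * c)"
  proof (rule contI)
    fix Y assume "Complete_Partial_Order.chain ord Y" "Y \<noteq> {}"
    then have "f (lub Y) = Sup (f ` Y)"
      using mcont_contD[OF assms] by blast
    then show "f (lub Y) * c = Sup ((\<lambda>x. f x * c) ` Y)"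
      by (simp add: SUP_mult_right_ennreal)
  qed
qed

lemma Pi_pmf_split:
  assumes "finite I" "V \<subseteq> I"
  shows "Pi_pmf I d P = bind_pmf (Pi_pmf V d P) (\<lambda>a. bind_pmf (Pi_pmf (I - V) d P)
           (\<lambda>b. return_pmf (override_on b a V)))"
proof -
  have "Pi_pmf I d P = Pi_pmf (V \<union> (I - V)) d P"
    using assms(2) by (simp add: Un_absorb1)
  also have "\<dots> = map_pmf (\<lambda>(a, b) x. if x \<in> V then a x else b x)
                   (pair_pmf (Pi_pmf V d P) (Pi_pmf (I - V) d P))"
    using assms by (intro Pi_pmf_union) (auto intro: finite_subset)
  finally show ?thesis
    by (simp add: pair_pmf_def map_pmf_def bind_assoc_pmf bind_return_pmf override_on_def)
qed

lemma bind_pmf_if_const_cond: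
  assumes "\<And>a. a \<in> set_pmf p \<Longrightarrow> Q a \<longleftrightarrow> Q0"
  shows "bind_pmf p (\<lambda>a. if Q a then k a else return_pmf None) = (if Q0 then bind_pmf p k else return_pmf None)"
proof -
  have "bind_pmf p (\<lambda>a. if Q a then k a else return_pmf None)
      = bind_pmf p (\<lambda>a. if Q0 then k a else return_pmf None)"
    using assms by (intro bind_pmf_cong) auto
  then show ?thesis
    by (cases Q0) simp_all
qed

lemma bind_Pi_pmf_resample:
  fixes k :: "('i \<Rightarrow> 'a) \<Rightarrow> 'b spmf"
  assumes "finite I" "V \<subseteq> I"
    and split_C: "\<And>a b. a \<in> set_pmf (Pi_pmf V d P) \<Longrightarrow> b \<in> set_pmf (Pi_pmf (I - V) d P) \<Longrightarrow>
      override_on b a V \<in> C \<longleftrightarrow> F a \<and> override_on b a V \<in> G"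
    and G_indep: "\<And>a a' b. a \<in> set_pmf (Pi_pmf V d P) \<Longrightarrow> a' \<in> set_pmf (Pi_pmf V d P) \<Longrightarrow>
      b \<in> set_pmf (Pi_pmf (I - V) d P) \<Longrightarrow> override_on b a V \<in> G \<longleftrightarrow> override_on b a' V \<in> G"
  shows "bind_pmf (Pi_pmf I d P)
           (\<lambda>\<sigma>. if \<sigma> \<in> C then bind_pmf (Pi_pmf V d P) (\<lambda>\<tau>. k (override_on \<sigma> \<tau> V)) else return_pmf None)
       = bind_pmf (Pi_pmf V d P) (\<lambda>a. if F a
           then bind_pmf (Pi_pmf I d P) (\<lambda>\<rho>. if \<rho> \<in> G then k \<rho> else return_pmf None)
           else return_pmf None)"
    (is "?lhs = bind_pmf ?pV (\<lambda>a. if F a then ?rest else _)")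
proof -
  let ?pW = "Pi_pmf (I - V) d P"
  have split: "Pi_pmf I d P = bind_pmf ?pV (\<lambda>a. bind_pmf ?pW (\<lambda>b. return_pmf (override_on b a V)))"
    by (rule Pi_pmf_split[OF assms(1,2)])
  have override_twice: "override_on (override_on b a V) \<tau> V = override_on b \<tau> V" for a b \<tau> :: "'i \<Rightarrow> 'a"
    by (auto simp: override_on_def)
  have rest: "?rest = bind_pmf ?pW (\<lambda>b. bind_pmf ?pV
                (\<lambda>\<tau>. if override_on b \<tau> V \<in> G then k (override_on b \<tau> V) else return_pmf None))"
    unfolding split by (simp add: bind_assoc_pmf bind_return_pmf bind_commute_pmf[of ?pV ?pW])
  have "?lhs = bind_pmf ?pV (\<lambda>a. bind_pmf ?pW (\<lambda>b. if override_on b a V \<in> C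
                 then bind_pmf ?pV (\<lambda>\<tau>. k (override_on b \<tau> V)) else return_pmf None))"
    unfolding split by (simp add: bind_assoc_pmf bind_return_pmf override_twice cong: if_cong)
  also have "\<dots> = bind_pmf ?pV (\<lambda>a. if F a then ?rest else return_pmf None)"
  proof (intro bind_pmf_cong refl)
    fix a assume a: "a \<in> set_pmf ?pV"
    show "bind_pmf ?pW (\<lambda>b. if override_on b a V \<in> C
            then bind_pmf ?pV (\<lambda>\<tau>. k (override_on b \<tau> V)) else return_pmf None)
        = (if F a then ?rest else return_pmf None)"
    proof (cases "F a")
      case True
      have "bind_pmf ?pV (\<lambda>\<tau>. if override_on b \<tau> V \<in> G then k (override_on b \<tau> V) else return_pmf None)
          = (if override_on b a V \<in> G then bind_pmf ?pV (\<lambda>\<tau>. k (override_on b \<tau> V)) else return_pmf None)"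
        if b: "b \<in> set_pmf ?pW" for b
        using G_indep[OF a _ b] by (intro bind_pmf_if_const_cond) blast
      with True show ?thesis
        unfolding rest using split_C[OF a] by (auto intro!: bind_pmf_cong)
    next
      case False
      then show ?thesis
        using split_C[OF a] by (simp cong: bind_pmf_cong)
    qed
  qed
  finally show ?thesis .
qed

lemma override_on_in_set_Pi_pmf:
  assumes "finite I" "V \<subseteq> I" "a \<in> set_pmf (Pi_pmf V d P)" "b \<in> set_pmf (Pi_pmf (I - V) d P)"
  shows "override_on b a V \<in> set_pmf (Pi_pmf I d P)"
  using assms(3,4) unfolding Pi_pmf_split[OF assms(1,2)] by auto

lemma ennreal_spmf_bind_partition:
  assumes "finite X" "\<And>a. r a \<in> X"
  shows "ennreal (spmf (bind_pmf p k) x)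
           = (\<Sum>R\<in>X. ennreal (spmf (bind_pmf p (\<lambda>a. if r a = R then k a else return_pmf None)) x))"
proof -
  have "ennreal (spmf (k a) x) = (\<Sum>R\<in>X. ennreal (spmf (if r a = R then k a else return_pmf None) x))" for a
  proof -
    have "(\<Sum>R\<in>X. ennreal (spmf (if r a = R then k a else return_pmf None) x))
        = (\<Sum>R\<in>X. if r a = R then ennreal (spmf (k a) x) else 0)"
      by (intro sum.cong) auto
    then show ?thesis
      using assms by simp
  qed
  then have "ennreal (spmf (bind_pmf p k) x)
      = (\<integral>\<^sup>+ a. (\<Sum>R\<in>X. ennreal (spmf (if r a = R then k a else return_pmf None) x)) \<partial>measure_pmf p)"
    unfolding ennreal_pmf_bind by presburger
  also have "\<dots> = (\<Sum>R\<in>X. \<integral>\<^sup>+ a. ennreal (spmf (if r a = R then k a else return_pmf None) x) \<partial>measure_pmf p)"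
    by (rule nn_integral_sum) simp
  also have "\<dots> = (\<Sum>R\<in>X. ennreal (spmf (bind_pmf p (\<lambda>a. if r a = R then k a else return_pmf None)) x))"
    by (simp only: ennreal_pmf_bind if_distrib)
  finally show ?thesis .
qed

definition proportional_on :: "'a pmf \<Rightarrow> 'a set \<Rightarrow> ('a \<Rightarrow> ennreal) \<Rightarrow> bool" where
  "proportional_on p S \<phi> \<longleftrightarrow>
     (\<forall>x. x \<notin> S \<inter> set_pmf p \<longrightarrow> \<phi> x = 0) \<and>
     (\<forall>x\<in>S \<inter> set_pmf p. \<forall>y\<in>S \<inter> set_pmf p. \<phi> x * pmf p y = \<phi> y * pmf p x)"

lemma proportional_on_cmult: "proportional_on p S \<phi> \<Longrightarrow> proportional_on p S (\<lambda>x. c * \<phi> x)"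
  unfolding proportional_on_def by (simp add: mult.assoc)

lemma proportional_on_sum:
  assumes "\<And>i. i \<in> I \<Longrightarrow> proportional_on p S (\<phi> i)"
  shows "proportional_on p S (\<lambda>x. \<Sum>i\<in>I. \<phi> i x)"
  using assms unfolding proportional_on_def sum_distrib_right by auto

lemma proportional_on_pmf:
  assumes "S \<inter> set_pmf p \<subseteq> C" "C \<subseteq> S"
  shows "proportional_on p S (\<lambda>x. if x \<in> C then ennreal (pmf p x) else 0)"
  using assms unfolding proportional_on_def by (auto simp: set_pmf_iff mult.commute)

lemma spmf_eq_weight_cond_pmf:
  assumes proportional: "proportional_on p S (\<lambda>x. ennreal (spmf q x))" and pos: "weight_spmf q > 0"
  shows "spmf q x = weight_spmf q * pmf (cond_pmf p S) x"
proof -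
  have "\<exists>y. spmf q y \<noteq> 0"
  proof (rule ccontr)
    assume "\<nexists>y. spmf q y \<noteq> 0"
    then have "ennreal (weight_spmf q) = 0"
      by (simp add: weight_spmf_eq_nn_integral_spmf)
    with pos show False by simp
  qed
  then obtain y where y: "spmf q y \<noteq> 0" ..
  then have yS: "y \<in> S \<inter> set_pmf p"
    using proportional by (auto simp: proportional_on_def)
  then have py: "pmf p y > 0"
    by (simp add: pmf_positive)
  define c where "c = spmf q y / pmf p y"
  have c_nonneg: "c \<ge> 0"
    by (simp add: c_def)
  have q_eq: "spmf q x = c * (if x \<in> S then pmf p x else 0)" for x
  proof (cases "x \<in> S \<inter> set_pmf p")
    case True
    then have "ennreal (spmf q x) * ennreal (pmf p y) = ennreal (spmf q y) * ennreal (pmf p x)"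
      using proportional yS unfolding proportional_on_def by blast
    then have "ennreal (spmf q x * pmf p y) = ennreal (spmf q y * pmf p x)"
      by (simp add: ennreal_mult'')
    then have "spmf q x * pmf p y = spmf q y * pmf p x"
      by simp
    with True py show ?thesis
      by (simp add: c_def field_simps)
  next
    case False
    then have "x \<in> S \<Longrightarrow> pmf p x = 0"
      by (simp add: set_pmf_iff)
    moreover have "spmf q x = 0"
      using proportional False unfolding proportional_on_def by simp
    ultimately show ?thesis by simp
  qed
  have "ennreal (weight_spmf q) = (\<integral>\<^sup>+ x. ennreal (spmf q x) \<partial>count_space UNIV)"
    by (rule weight_spmf_eq_nn_integral_spmf)
  also have "\<dots> = (\<integral>\<^sup>+ x. ennreal c * (ennreal (pmf p x) * indicator S x) \<partial>count_space UNIV)"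
    by (intro nn_integral_cong) (simp add: q_eq ennreal_mult'' indicator_def c_nonneg)
  also have "\<dots> = ennreal c * (\<integral>\<^sup>+ x. indicator S x \<partial>measure_pmf p)"
    by (simp add: nn_integral_cmult nn_integral_measure_pmf)
  also have "\<dots> = ennreal (c * measure_pmf.prob p S)"
    by (simp add: measure_pmf.emeasure_eq_measure ennreal_mult'')
  finally have weight: "weight_spmf q = c * measure_pmf.prob p S"
    using c_nonneg by (simp add: weight_spmf_nonneg)
  have support: "set_pmf p \<inter> S \<noteq> {}"
    using yS by blast
  then have "measure_pmf.prob p S \<noteq> 0"
    by (simp add: measure_pmf_zero_iff)
  then show ?thesis
    by (simp add: pmf_cond[OF support] weight q_eq)
qed

locale gprs = res_procedure n m Dom vbl A
  for n m :: nat and Dom :: "nat \<Rightarrow> 'd set" and vbl and A +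
  fixes P :: "nat \<Rightarrow> 'd pmf" and d :: 'd
  assumes ranges: "\<And>j. j < n \<Longrightarrow> set_pmf (P j) \<subseteq> Dom j"
    and vbl_sub: "\<And>i. i < m \<Longrightarrow> vbl i \<subseteq> {0..<n}"
    and determined: "\<And>i \<sigma> \<tau>. i < m \<Longrightarrow> (\<forall>j\<in>vbl i. \<sigma> j = \<tau> j) \<Longrightarrow> (\<sigma> \<in> A i \<longleftrightarrow> \<tau> \<in> A i)"
begin

abbreviation "mu \<equiv> prod_dist n P d"
abbreviation "good \<equiv> {\<sigma>. Bad m A \<sigma> = {}}"

lemma set_prod_dist_assignments: "\<sigma> \<in> set_pmf mu \<Longrightarrow> \<sigma> \<in> assignments n Dom"
  using ranges
  by (auto simp: prod_dist_def set_Pi_pmf PiE_dflt_def assignments_def)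

lemma vblS_subset: "R \<subseteq> {..<m} \<Longrightarrow> vblS vbl R \<subseteq> {0..<n}"
  using vbl_sub by (auto simp: vblS_def)

lemma event_cong_vblS:
  assumes "i < m" "i \<in> S" "\<forall>j\<in>vblS vbl S. \<tau> j = \<sigma> j"
  shows "\<tau> \<in> A i \<longleftrightarrow> \<sigma> \<in> A i"
  using assms vbl_subset_vblS[of i S] by (intro determined) auto

lemma Res_eq_if_agree:
  assumes "\<tau> \<in> assignments n Dom" "\<forall>j\<in>vblS vbl (res \<sigma>). \<tau> j = \<sigma> j"
    and "\<tau> \<in> avoiding (untouched (res \<sigma>))"
  shows "res \<tau> = res \<sigma>"
proof -
  have "\<tau> \<in> A i \<longleftrightarrow> \<sigma> \<in> A i" if i: "i < m" for i
  proof (cases "i \<in> res \<sigma>")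
    case False
    then show ?thesis
      using avoided_off_Res[OF assms i False] Bad_subset_Res[of \<sigma>] i by (auto simp: Bad_def)
  qed (use event_cong_vblS[OF i _ assms(2)] in blast)
  then have "Bad m A \<tau> = Bad m A \<sigma>"
    by (auto simp: Bad_def)
  then show ?thesis
    using assms(2) by (rule Res_cong)
qed

lemma avoiding_if_agree:
  assumes "\<tau> \<in> assignments n Dom" "\<forall>j\<in>vblS vbl (res \<sigma>). \<tau> j = \<sigma> j"
    and "\<tau> \<in> avoiding (untouched (res \<sigma>))" "\<sigma> \<in> avoiding J" "J \<subseteq> {..<m}"
  shows "\<tau> \<in> avoiding J"
proof -
  have "\<tau> \<notin> A i" if "i \<in> J" for i
  proof -
    from that assms(4,5) have i: "i < m" and "\<sigma> \<notin> A i"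
      by (auto simp: avoiding_def)
    then show ?thesis
      using avoided_off_Res[OF assms(1-3) i] event_cong_vblS[OF i _ assms(2)] by blast
  qed
  then show ?thesis
    by (simp add: avoiding_def)
qed

lemma Res_block_iff:
  assumes "res \<sigma> = R" "\<sigma> \<in> avoiding J" "J \<subseteq> {..<m}"
    and "\<tau> \<in> set_pmf mu" "\<forall>j\<in>vblS vbl R. \<tau> j = \<sigma> j"
  shows "res \<tau> = R \<and> \<tau> \<in> avoiding J \<longleftrightarrow> \<tau> \<in> avoiding (untouched R)"
  using assms avoiding_untouched_Res[of \<tau>] set_prod_dist_assignments[OF assms(4)]
    Res_eq_if_agree[of \<tau> \<sigma>] avoiding_if_agree[of \<tau> \<sigma> J] by auto

lemma avoiding_untouched_cong:
  assumes "\<forall>j. j \<notin> vblS vbl R \<longrightarrow> \<tau> j = \<tau>' j"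
  shows "\<tau> \<in> avoiding (untouched R) \<longleftrightarrow> \<tau>' \<in> avoiding (untouched R)"
proof -
  have "\<tau> \<in> A i \<longleftrightarrow> \<tau>' \<in> A i" if "i \<in> untouched R" for i
    using that assms by (intro determined) (auto simp: untouched_def)
  then show ?thesis
    by (auto simp: avoiding_def)
qed

definition "from_avoiding f J = bind_pmf mu (\<lambda>\<sigma>. if \<sigma> \<in> avoiding J then f \<sigma> else return_pmf None)"

definition "resampling_invariant f \<longleftrightarrow>
  (\<forall>J\<subseteq>{..<m}. proportional_on mu good (\<lambda>x. ennreal (spmf (from_avoiding f J) x)))"

definition "gprs_body f \<sigma> = (if Bad m A \<sigma> = {} then return_spmf \<sigma>
   else bind_pmf (Pi_pmf (vblS vbl (res \<sigma>)) d P) (\<lambda>\<tau>. f (override_on \<sigma> \<tau> (vblS vbl (res \<sigma>)))))"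

abbreviation "block f J R \<equiv>
  bind_pmf mu (\<lambda>\<sigma>. if res \<sigma> = R \<and> \<sigma> \<in> avoiding J then gprs_body f \<sigma> else return_pmf None)"

lemma proportional_block_empty:
  assumes "J \<subseteq> {..<m}"
  shows "proportional_on mu good (\<lambda>x. ennreal (spmf (block f J {}) x))"
proof -
  let ?C = "{\<sigma>. res \<sigma> = {} \<and> \<sigma> \<in> avoiding J}"
  have block: "block f J {} = bind_pmf mu (\<lambda>\<sigma>. if \<sigma> \<in> ?C then return_spmf \<sigma> else return_pmf None)"
    by (intro bind_pmf_cong refl) (auto simp: gprs_body_def Res_empty_iff)
  have "ennreal (spmf (block f J {}) x) = (if x \<in> ?C then ennreal (pmf mu x) else 0)" for x
    unfolding block by (rule ennreal_spmf_bind_if_return)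
  moreover have "proportional_on mu good (\<lambda>x. if x \<in> ?C then ennreal (pmf mu x) else 0)"
    using assms by (intro proportional_on_pmf) (auto simp: Res_empty_iff avoiding_def Bad_def)
  ultimately show ?thesis
    by simp
qed

lemma proportional_block:
  assumes inv: "resampling_invariant f" and R: "R \<subseteq> {..<m}" "R \<noteq> {}" and J: "J \<subseteq> {..<m}"
  shows "proportional_on mu good (\<lambda>x. ennreal (spmf (block f J R) x))"
proof -
  define V where "V = vblS vbl R"
  have V: "V \<subseteq> {0..<n}"
    unfolding V_def using R(1) by (rule vblS_subset)
  define C where "C = {\<sigma>. res \<sigma> = R \<and> \<sigma> \<in> avoiding J}"
  define F where "F a \<longleftrightarrow> (\<exists>\<sigma>\<in>C \<inter> set_pmf mu. \<forall>j\<in>V. \<sigma> j = a j)" for a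
  have "block f J R = bind_pmf mu
      (\<lambda>\<sigma>. if \<sigma> \<in> C then bind_pmf (Pi_pmf V d P) (\<lambda>\<tau>. f (override_on \<sigma> \<tau> V)) else return_pmf None)"
    using R(2) Res_empty_iff by (intro bind_pmf_cong refl) (auto simp: C_def V_def gprs_body_def)
  also have "\<dots> = bind_pmf (Pi_pmf V d P) (\<lambda>a. if F a then from_avoiding f (untouched R) else return_pmf None)"
    unfolding from_avoiding_def prod_dist_def
  proof (rule bind_Pi_pmf_resample[OF _ V])
    fix a b assume a: "a \<in> set_pmf (Pi_pmf V d P)" and b: "b \<in> set_pmf (Pi_pmf ({0..<n} - V) d P)"
    let ?\<sigma> = "override_on b a V"
    have \<sigma>: "?\<sigma> \<in> set_pmf mu"
      unfolding prod_dist_def by (rule override_on_in_set_Pi_pmf[OF _ V a b]) simp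
    have membership: "?\<sigma> \<in> C \<longleftrightarrow> ?\<sigma> \<in> avoiding (untouched R)" if \<sigma>0: "\<sigma>0 \<in> C" and "\<forall>j\<in>V. \<sigma>0 j = a j" for \<sigma>0
    proof -
      have "\<forall>j\<in>vblS vbl R. ?\<sigma> j = \<sigma>0 j"
        using that(2) by (simp add: V_def)
      with \<sigma>0 show ?thesis
        using Res_block_iff[of \<sigma>0 R J ?\<sigma>] J \<sigma> by (simp add: C_def)
    qed
    have "\<forall>j\<in>V. ?\<sigma> j = a j"
      by simp
    then show "?\<sigma> \<in> C \<longleftrightarrow> F a \<and> ?\<sigma> \<in> avoiding (untouched R)"
      using \<sigma> membership unfolding F_def by blast
  next
    fix a a' b
    show "override_on b a V \<in> avoiding (untouched R) \<longleftrightarrow> override_on b a' V \<in> avoiding (untouched R)"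
      using avoiding_untouched_cong[of R "override_on b a V" "override_on b a' V"]
      by (simp add: V_def override_on_def)
  qed simp
  finally have "ennreal (spmf (block f J R) x)
      = emeasure (Pi_pmf V d P) {a. F a} * ennreal (spmf (from_avoiding f (untouched R)) x)" for x
    by (simp add: ennreal_spmf_bind_if_const)
  then show ?thesis
    using inv untouched_subset_lessThan
    by (simp add: resampling_invariant_def proportional_on_cmult)
qed

lemma resampling_invariant_body:
  assumes "resampling_invariant f"
  shows "resampling_invariant (gprs_body f)"
  unfolding resampling_invariant_def
proof (intro allI impI)
  fix J :: "nat set" assume J: "J \<subseteq> {..<m}"
  have "ennreal (spmf (from_avoiding (gprs_body f) J) x) = (\<Sum>R\<in>Pow {..<m}. ennreal (spmf (block f J R) x))" for x
    unfolding from_avoiding_def if_if_eq_conj[symmetric]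
    by (rule ennreal_spmf_bind_partition) (use Res_subset_lessThan in auto)
  moreover have "proportional_on mu good (\<lambda>x. ennreal (spmf (block f J R) x))" if "R \<in> Pow {..<m}" for R
    using that proportional_block_empty[OF J] proportional_block[OF assms _ _ J] by (cases "R = {}") auto
  ultimately show "proportional_on mu good (\<lambda>x. ennreal (spmf (from_avoiding (gprs_body f) J) x))"
    using proportional_on_sum[of "Pow {..<m}" mu good "\<lambda>R x. ennreal (spmf (block f J R) x)"] by simp
qed

lemma resampling_invariant_bot: "resampling_invariant (\<lambda>_. return_pmf None)"
  by (simp add: resampling_invariant_def proportional_on_def from_avoiding_def)

lemma mcont_spmf_from_avoiding:
  "mcont (fun_lub lub_spmf) (fun_ord (ord_spmf (=))) Sup (\<le>)
     (\<lambda>f. ennreal (spmf (bind_pmf mu (\<lambda>\<sigma>. if \<sigma> \<in> G then f (t \<sigma>) else return_pmf None)) x))"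
  unfolding bind_spmf_of_pmf[symmetric]
  by (intro mcont2mcont_ennreal_spmf mcont_bind_spmf mcont_if mcont_call) simp_all

lemma admissible_resampling_invariant:
  "spmf.admissible (\<lambda>f. resampling_invariant (\<lambda>\<sigma>. f (t \<sigma>)))"
  unfolding resampling_invariant_def proportional_on_def from_avoiding_def Ball_def
  by (intro admissible_all admissible_imp admissible_conj admissible_eq_mcontI[where lub = Sup and ord = "(\<le>)"]
      mcont_spmf_from_avoiding mcont_mult_ennreal) simp_all

lemma resampling_invariant_gprs_loop:
  "resampling_invariant (gprs_loop P d (\<lambda>\<sigma>. Bad m A \<sigma> = {}) (\<lambda>\<sigma>. vblS vbl (res \<sigma>)))"
proof (induction rule: gprs_loop.fixp_induct[where P = "\<lambda>F. resampling_invariant (F P d (\<lambda>\<sigma>. Bad m A \<sigma> = {}) (\<lambda>\<sigma>. vblS vbl (res \<sigma>)))"])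
  case 1
  txt \<open>\<open>gprs_loop\<close> takes its arguments as one nested tuple, which \<open>t\<close> rebuilds.\<close>
  show ?case
    using admissible_resampling_invariant[where t = "\<lambda>\<sigma>. ((((P, d), \<lambda>\<sigma>. Bad m A \<sigma> = {}), \<lambda>\<sigma>. vblS vbl (res \<sigma>)), \<sigma>)"]
    by (simp add: curry_def)
next
  case 2
  show ?case by (rule resampling_invariant_bot)
next
  case (3 F)
  show ?case
    using resampling_invariant_body[OF 3] unfolding gprs_body_def[abs_def] override_on_def
    by (simp cong: if_cong)
qed

end

theorem theorem26:
  fixes n m :: nat and Dom :: "nat \<Rightarrow> 'd set" and P :: "nat \<Rightarrow> 'd pmf" and d :: 'd
    and vbl :: "nat \<Rightarrow> nat set" and A :: "nat \<Rightarrow> (nat \<Rightarrow> 'd) set"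
  assumes ranges: "\<And>j. j < n \<Longrightarrow> set_pmf (P j) \<subseteq> Dom j"
    and vbl_sub: "\<And>i. i < m \<Longrightarrow> vbl i \<subseteq> {0..<n}"
    and determined: "\<And>i \<sigma> \<tau>. i < m \<Longrightarrow> (\<forall>j\<in>vbl i. \<sigma> j = \<tau> j) \<Longrightarrow> (\<sigma> \<in> A i \<longleftrightarrow> \<tau> \<in> A i)"
    and halts: "weight_spmf (GPRS n m Dom P d vbl A) > 0"
  shows "\<forall>\<tau>. spmf (GPRS n m Dom P d vbl A) \<tau>
           = weight_spmf (GPRS n m Dom P d vbl A)
             * pmf (cond_pmf (prod_dist n P d) {\<sigma>. Bad m A \<sigma> = {}}) \<tau>"
proof
  fix \<tau>
  interpret gprs n m Dom vbl A P d
    by unfold_locales (use ranges vbl_sub determined in blast)+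
  have "GPRS n m Dom P d vbl A
      = from_avoiding (gprs_loop P d (\<lambda>\<sigma>. Bad m A \<sigma> = {}) (\<lambda>\<sigma>. vblS vbl (res \<sigma>))) {}"
    by (simp add: GPRS_def from_avoiding_def avoiding_def)
  then have "proportional_on mu good (\<lambda>x. ennreal (spmf (GPRS n m Dom P d vbl A) x))"
    using resampling_invariant_gprs_loop by (simp add: resampling_invariant_def)
  then show "spmf (GPRS n m Dom P d vbl A) \<tau>
      = weight_spmf (GPRS n m Dom P d vbl A) * pmf (cond_pmf mu good) \<tau>"
    using halts by (rule spmf_eq_weight_cond_pmf)
qed

end
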